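(* Let $K$ be a perfect field of characteristic $p>0$, let $R=K[x]$, and let $\mathcal{D}$ be the ring of $K$-linear differential operators on $R$. Let $M=R\oplus R$ be the $\mathcal{D}$-module defined as in the context with $g_r=x^{p^r+p^{2r}}$ for all $r\geq 0$. Then $M$ is not holonomic.
   Context: Differential operators: for $t\geq 0$ let $\partial_t=D_t:R\to R$ be the $K$-linear map sending $x^v$ to $\binom{v}{t}x^{v-t}$ (so $\partial_0$ is the identity). The ring $\mathcal{D}$ of $K$-linear differential operators on $R=K[x]$ has $K$-basis $\{x^i\partial_t : i,t\geq 0\}$, and as a $K$-algebra it is generated by $x$ and the operators $\partial_{p^k}$, $k\geq 0$. The Bernstein filtration $\mathcal{F}_0\subset\mathcal{F}_1\subset\cdots$ of $\mathcal{D}$ is given by $\mathcal{F}_s=$ the $K$-span of $\{x^i\partial_t : i+t\leq s\}$. A $K$-filtration of a (left) $\mathcal{D}$-module $N$ is an ascending chain of $K$-subspaces $N_0\subset N_1\subset\cdots$ with $\bigcup_i N_i=N$ and $\mathcal{F}_iN_j\subset N_{i+j}$ for all $i,j$. A $\mathcal{D}$-module $N$ is holonomic if it has a $K$-filtration $\{N_i\}$ and a constant $C$ with $\dim_K N_i\leq C i$ for all $i$ (this is the definition with $n=1$ variable). The module: given elements $g_r\in R^{p^r}=K[x^{p^r}]$ ($r\geq 0$), put $\sigma_k=-\sum_{r=0}^k g_r$. Let $M^{(i)}$ be the free $R^{p^i}$-module on $s_1^{(i)},s_2^{(i)}$ and $\Theta_i:M^{(i+1)}\to M^{(i)}$ the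 $R^{p^{i+1}}$-linear map with $\Theta_i(s_1^{(i+1)})=s_1^{(i)}$, $\Theta_i(s_2^{(i+1)})=g_is_1^{(i)}+s_2^{(i)}$. The induced maps give $R$-module isomorphisms $R\otimes_{R^{p^s}}M^{(s)}\cong M^{(0)}$, and the natural action of $\mathrm{End}_{R^{p^s}}(R)$ (the operators of order $<p^s$) on $R\otimes_{R^{p^s}}M^{(s)}$ transfers to $M^{(0)}$; these actions are compatible and give $M=M^{(0)}=R\oplus R$ a $\mathcal{D}$-module structure. Concretely, $x$ acts coordinatewise and for all $k\geq 0$ and $f_1,f_2\in R$, $\partial_{p^k}(f_1,f_2)=\big(\partial_{p^k}f_1+(\partial_{p^k}\sigma_k)f_2,\ \partial_{p^k}f_2\big)$. *)

theory Defs
  imports "HOL-Computational_Algebra.Polynomial" "HOL-Library.Product_Plus"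
begin

definition hasse :: "nat \<Rightarrow> 'a::field poly \<Rightarrow> 'a poly" where
  "hasse t f = (\<Sum>v\<le>degree f. monom (of_nat (v choose t) * coeff f v) (v - t))"

definition perfect_char_p :: "'a::field itself \<Rightarrow> bool" where
  "perfect_char_p _ \<longleftrightarrow> CHAR('a) > 0 \<and> (\<forall>y::'a. \<exists>z. z ^ CHAR('a) = y)"

type_synonym 'a modM = "'a poly \<times> 'a poly"

definition scaleM :: "'a::field \<Rightarrow> 'a modM \<Rightarrow> 'a modM" where
  "scaleM c m = (smult c (fst m), smult c (snd m))"

lemma vector_space_scaleM: "vector_space (scaleM :: 'a::field \<Rightarrow> 'a modM \<Rightarrow> 'a modM)"
  by unfold_locales (auto simp: scaleM_def smult_add_right smult_add_left)

definition gfun :: "'a::field itself \<Rightarrow> nat \<Rightarrow> 'a poly" where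
  "gfun _ r = monom 1 (CHAR('a) ^ r + CHAR('a) ^ (2 * r))"

text \<open>S s = g_0 + ... + g_(s-1)  (= - sigma_(s-1)).  The images of the basis
 s_1^(s), s_2^(s) of M^(s) in M = M^(0) are (1,0) and (S s, 1).\<close>
definition Ssum :: "(nat \<Rightarrow> 'a::field poly) \<Rightarrow> nat \<Rightarrow> 'a poly" where
  "Ssum g s = (\<Sum>r<s. g r)"

text \<open>Action of partial_t on M, obtained from the identification
 R \<otimes>_{R^(p^s)} M^(s) = M with s = t (so p^s > t): writing
 (f1,f2) = (f1 - f2 S) * (1,0) + f2 * (S,1), the operator acts on the R-coefficients.\<close>
definition dact :: "(nat \<Rightarrow> 'a::field poly) \<Rightarrow> nat \<Rightarrow> 'a modM \<Rightarrow> 'a modM" where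
  "dact g t m = (let S = Ssum g t; f1 = fst m; f2 = snd m in
      (hasse t (f1 - f2 * S) + S * hasse t f2, hasse t f2))"

definition xdact :: "(nat \<Rightarrow> 'a::field poly) \<Rightarrow> nat \<Rightarrow> nat \<Rightarrow> 'a modM \<Rightarrow> 'a modM" where
  "xdact g i t m = (monom 1 i * fst (dact g t m), monom 1 i * snd (dact g t m))"

text \<open>A K-filtration N_0 \<subseteq> N_1 \<subseteq> ... of K-subspaces exhausting M with
 F_i N_j \<subseteq> N_(i+j); since N_(i+j) is a subspace and F_i is spanned by the
 x^a partial_t with a + t \<le> i, the latter condition is stated on these generators.\<close>
definition K_filtration :: "(nat \<Rightarrow> 'a::field poly) \<Rightarrow> (nat \<Rightarrow> 'a modM set) \<Rightarrow> bool" where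
  "K_filtration g N \<longleftrightarrow>
     (\<forall>i. module.subspace scaleM (N i)) \<and>
     (\<forall>i. N i \<subseteq> N (Suc i)) \<and>
     (\<Union>i. N i) = UNIV \<and>
     (\<forall>i j a t m. a + t \<le> i \<longrightarrow> m \<in> N j \<longrightarrow> xdact g a t m \<in> N (i + j))"

definition holonomic :: "(nat \<Rightarrow> 'a::field poly) \<Rightarrow> bool" where
  "holonomic g \<longleftrightarrow> (\<exists>N C. K_filtration g N \<and>
     (\<forall>i. (\<exists>B. finite B \<and> module.span scaleM B = N i) \<and>
          real (vector_space.dim scaleM (N i)) \<le> C * real i))"

end

theory Submission
  imports Defs "HOL-Computational_Algebra.Primes"
begin

text \<open>
  The operator x^a D_{p^k} sends (0, 1) to (-x^a D_{p^k} S, 0), where S = g_0 + ... + g_{p^k - 1}.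
  In characteristic p we have (1 + X)^(p^r + p^(2r)) = (1 + X^(p^r)) (1 + X^(p^(2r))), so of all
  summands g_r of S only g_k contributes to D_{p^k} S in degrees at least p^(2k), and
  D_{p^k} S has degree exactly p^(2k).  Hence, if (0, 1) lies in N_j, the elements
  x^a D_{p^k} (0, 1) with K <= k < 2K and a < p^(2K-1) all lie in N_{p^(2K) + j} and have the
  pairwise distinct degrees a + p^(2k); thus dim N_{p^(2K) + j} >= K p^(2K-1), which
  eventually exceeds any linear bound C (p^(2K) + j).
\<close>

lemma coeff_hasse: "coeff (hasse t f) d = of_nat ((d + t) choose t) * coeff f (d + t)"
proof -
  have "coeff (hasse t f) d =
      (\<Sum>v\<le>degree f. if v = d + t then of_nat (v choose t) * coeff f v else 0)"
    unfolding hasse_def coeff_sum coeff_monom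
    by (rule sum.cong[OF refl]) (auto simp: binomial_eq_0)
  also have "\<dots> = of_nat ((d + t) choose t) * coeff f (d + t)"
    by (auto simp: coeff_eq_0)
  finally show ?thesis .
qed

lemma hasse_uminus: "hasse t (- f) = - hasse t f"
  by (rule poly_eqI) (simp add: coeff_hasse)

lemma hasse_one: "t \<ge> 1 \<Longrightarrow> hasse t 1 = 0"
  by (rule poly_eqI) (simp add: coeff_hasse coeff_1)

lemma of_nat_choose_char_power_add:
  assumes "CHAR('a::field) > 0"
  defines "p \<equiv> CHAR('a)"
  shows "(of_nat ((p ^ m + p ^ n) choose e) :: 'a) =
    of_bool (e = 0) + of_bool (e = p ^ m) + of_bool (e = p ^ n) + of_bool (e = p ^ m + p ^ n)"
proof (cases "e \<le> p ^ m + p ^ n")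
  case True
  have X: "[:1, 1:] = (1 :: 'a poly) + monom 1 1"
    by (rule poly_eqI) (simp add: coeff_pCons monom_altdef split: nat.split)
  have "prime CHAR('a poly)"
    using prime_CHAR_semidom[OF assms(1)] by simp
  from freshmans_dream'[OF this refl]
  have frobenius: "(1 + monom 1 1 :: 'a poly) ^ (p ^ i) = 1 + monom 1 (p ^ i)" for i
    by (simp add: p_def monom_altdef power_mult)
  have "([:1, 1:] :: 'a poly) ^ (p ^ m + p ^ n) = (1 + monom 1 (p ^ m)) * (1 + monom 1 (p ^ n))"
    unfolding power_add X frobenius ..
  also have "\<dots> = 1 + monom 1 (p ^ m) + monom 1 (p ^ n) + monom 1 (p ^ m + p ^ n)"
    by (simp add: algebra_simps mult_monom)
  finally have binomial_expansion:
    "([:1, 1:] :: 'a poly) ^ (p ^ m + p ^ n) =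
      1 + monom 1 (p ^ m) + monom 1 (p ^ n) + monom 1 (p ^ m + p ^ n)" .
  have "(of_nat ((p ^ m + p ^ n) choose e) :: 'a) = coeff ([:1, 1:] ^ (p ^ m + p ^ n)) e"
    using coeff_linear_poly_power[OF True, of "1 :: 'a" 1] by simp
  then show ?thesis
    unfolding binomial_expansion by (simp add: coeff_1)
next
  case False
  then show ?thesis by (auto simp: binomial_eq_0)
qed

lemma strict_mono_power_add_power_double:
  fixes p :: nat
  assumes "p \<ge> 2"
  shows "strict_mono (\<lambda>r. p ^ r + p ^ (2 * r))"
  unfolding strict_mono_Suc_iff using assms
  by (intro allI add_strict_mono power_strict_increasing) auto

lemma coeff_Ssum_gfun:
  assumes "CHAR('a::field) \<ge> 2"
  shows "coeff (Ssum (gfun TYPE('a)) t) e =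
    of_bool (\<exists>r<t. CHAR('a) ^ r + CHAR('a) ^ (2 * r) = e)"
proof (cases "\<exists>r<t. CHAR('a) ^ r + CHAR('a) ^ (2 * r) = e")
  case True
  then obtain r0 where r0: "r0 < t" "CHAR('a) ^ r0 + CHAR('a) ^ (2 * r0) = e"
    by blast
  have "coeff (Ssum (gfun TYPE('a)) t) e = (\<Sum>r<t. of_bool (r = r0))"
    unfolding Ssum_def gfun_def coeff_sum coeff_monom
    using r0 strict_mono_eq[OF strict_mono_power_add_power_double[OF assms]]
    by (intro sum.cong) auto
  with r0 True show ?thesis
    by simp
next
  case False
  then show ?thesis
    unfolding Ssum_def gfun_def coeff_sum coeff_monom by auto
qed

lemma coeff_hasse_Ssum_gfun:
  assumes "CHAR('a::field) \<ge> 2" "k \<ge> 1"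
  defines "p \<equiv> CHAR('a)"
  assumes "p ^ (2 * k) \<le> d"
  shows "coeff (hasse (p ^ k) (Ssum (gfun TYPE('a)) (p ^ k))) d = of_bool (d = p ^ (2 * k))"
proof (cases "\<exists>r<p ^ k. p ^ r + p ^ (2 * r) = d + p ^ k")
  case True
  then obtain r where r: "p ^ r + p ^ (2 * r) = d + p ^ k" by blast
  have mono: "strict_mono (\<lambda>r. p ^ r + p ^ (2 * r))"
    using strict_mono_power_add_power_double assms(1) p_def by blast
  have "p ^ k + p ^ (2 * k) \<le> p ^ r + p ^ (2 * r)"
    using r assms(4) by simp
  then have "k \<le> r"
    using strict_mono_less_eq[OF mono] by blast
  have p1: "1 < p"
    using assms(1) p_def by simp
  have "p ^ k \<noteq> p ^ (2 * r)"
    using \<open>k \<le> r\<close> assms(2) p1 by (simp add: power_inject_exp)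
  moreover have "p ^ k < p ^ r + p ^ (2 * r)"
  proof -
    have "p ^ k \<le> p ^ r"
      using \<open>k \<le> r\<close> p1 by (intro power_increasing) auto
    moreover have "0 < p ^ (2 * r)"
      using p1 by simp
    ultimately show ?thesis
      by linarith
  qed
  moreover have "r = k \<longleftrightarrow> d = p ^ (2 * k)"
    using r strict_mono_eq[OF mono, of r k] by auto
  ultimately have "(of_nat ((d + p ^ k) choose p ^ k) :: 'a) = of_bool (d = p ^ (2 * k))"
    using of_nat_choose_char_power_add[of r "2 * r" "p ^ k", where 'a='a] assms(1) p1
    by (auto simp: p_def[symmetric] r[symmetric] power_inject_exp)
  with True show ?thesis
    unfolding coeff_hasse coeff_Ssum_gfun[OF assms(1)] p_def by simp
next
  case False
  have "k < p ^ k"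
    using assms(1) p_def by (simp add: power_gt_expt)
  with False have "d \<noteq> p ^ (2 * k)"
    by auto
  with False show ?thesis
    unfolding coeff_hasse coeff_Ssum_gfun[OF assms(1)] p_def by simp
qed

lemma degree_hasse_Ssum_gfun:
  assumes "CHAR('a::field) \<ge> 2" "k \<ge> 1"
  shows "degree (hasse (CHAR('a) ^ k) (Ssum (gfun TYPE('a)) (CHAR('a) ^ k))) = CHAR('a) ^ (2 * k)"
  using coeff_hasse_Ssum_gfun[OF assms]
  by (intro antisym degree_le le_degree) auto

lemma xdact_second_generator:
  "t \<ge> 1 \<Longrightarrow> xdact g a t (0, 1) = (- (monom 1 a * hasse t (Ssum g t)), 0)"
  by (simp add: xdact_def dact_def hasse_uminus hasse_one)

lemma independent_if_distinct_degrees: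
  fixes S :: "'a::field modM set"
  assumes nonzero: "\<forall>v\<in>S. fst v \<noteq> 0" and distinct: "inj_on (\<lambda>v. degree (fst v)) S"
  shows "\<not> module.dependent scaleM S"
proof
  interpret vector_space "scaleM :: 'a \<Rightarrow> 'a modM \<Rightarrow> 'a modM"
    by (rule vector_space_scaleM)
  assume "dependent S"
  then obtain T u where T: "finite T" "T \<subseteq> S" "(\<Sum>v\<in>T. scaleM (u v) v) = 0" "\<exists>v\<in>T. u v \<noteq> 0"
    unfolding dependent_explicit by blast
  define T' where "T' = {v\<in>T. u v \<noteq> 0}"
  have fin: "finite ((\<lambda>v. degree (fst v)) ` T')" and "(\<lambda>v. degree (fst v)) ` T' \<noteq> {}"
    using T unfolding T'_def by auto
  then obtain w where w: "w \<in> T'" "degree (fst w) = Max ((\<lambda>v. degree (fst v)) ` T')"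
    using Max_in by (metis imageE)
  then have w: "w \<in> T'" "\<forall>v\<in>T'. degree (fst v) \<le> degree (fst w)"
    using Max_ge[OF fin] by auto
  have "0 = coeff (fst (\<Sum>v\<in>T. scaleM (u v) v)) (degree (fst w))"
    using T(3) by simp
  also have "\<dots> = (\<Sum>v\<in>T. u v * coeff (fst v) (degree (fst w)))"
    by (simp add: fst_sum scaleM_def coeff_sum)
  also have "\<dots> = (\<Sum>v\<in>T. if v = w then u w * lead_coeff (fst w) else 0)"
  proof (rule sum.cong[OF refl])
    fix v assume "v \<in> T"
    show "u v * coeff (fst v) (degree (fst w)) = (if v = w then u w * lead_coeff (fst w) else 0)"
    proof (cases "v = w \<or> u v = 0")
      case False
      with \<open>v \<in> T\<close> have "v \<in> T'"
        unfolding T'_def by auto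
      with w False distinct T(2) have "degree (fst v) < degree (fst w)"
        unfolding T'_def inj_on_def by (metis (mono_tags, lifting) le_neq_implies_less mem_Collect_eq subsetD)
      with False show ?thesis
        by (simp add: coeff_eq_0)
    qed auto
  qed
  also have "\<dots> = u w * lead_coeff (fst w)"
    using w(1) T(1) unfolding T'_def by simp
  finally show False
    using w(1) T(2) nonzero unfolding T'_def by auto
qed

lemma card_le_dim_of_finite_span:
  fixes B T :: "'a::field modM set"
  assumes "finite B" "module.span scaleM B = V" "T \<subseteq> V" "\<not> module.dependent scaleM T"
  shows "card T \<le> vector_space.dim scaleM V"
proof -
  interpret vector_space "scaleM :: 'a \<Rightarrow> 'a modM \<Rightarrow> 'a modM"
    by (rule vector_space_scaleM)
  obtain A where A: "A \<subseteq> V" "independent A" "V \<subseteq> span A" "card A = dim V"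
    by (rule basis_exists)
  have "finite A"
    using independent_span_bound[OF assms(1) A(2)] A(1) assms(2) by auto
  then show ?thesis
    using independent_span_bound[OF _ assms(4), of A] A assms(3) by auto
qed

lemma add_power_eq_add_powerD:
  fixes p :: nat
  assumes "p \<ge> 2" "a < p ^ m" "b < p ^ n" "a + p ^ m = b + p ^ n"
  shows "m = n \<and> a = b"
proof -
  have "a + p ^ m < b + p ^ n" if "a < p ^ m" "m < n" for a b m n
  proof -
    have "a + p ^ m < 2 * p ^ m"
      using that by simp
    also have "\<dots> \<le> p ^ Suc m"
      using assms(1) by simp
    also have "\<dots> \<le> p ^ n"
      using that assms(1) by (intro power_increasing) auto
    finally show ?thesis
      by simp
  qed
  with assms show ?thesis
    by (metis less_irrefl linorder_neqE_nat add_right_cancel)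
qed

lemma K_filtration_gfun_dim_ge:
  assumes char: "CHAR('a::field) \<ge> 2"
    and filtration: "K_filtration (gfun TYPE('a)) N" and generator: "(0, 1) \<in> N j"
    and "K \<ge> 1" and span: "finite B" "module.span scaleM B = N (CHAR('a) ^ (2 * K) + j)"
  shows "K * CHAR('a) ^ (2 * K - 1) \<le> vector_space.dim scaleM (N (CHAR('a) ^ (2 * K) + j))"
proof -
  define p where "p = CHAR('a)"
  define Q where "Q = p ^ (2 * K - 1)"
  define I where "I = {K..<2 * K} \<times> {..<Q}"
  define \<phi> where "\<phi> = (\<lambda>(k, a). xdact (gfun TYPE('a)) a (p ^ k) (0, 1))"
  have p: "p \<ge> 2"
    using char p_def by simp
  have "p ^ (2 * K) = p * Q"
    using \<open>K \<ge> 1\<close> unfolding Q_def by (simp flip: power_Suc)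
  then have "2 * Q \<le> p ^ (2 * K)"
    using p by simp
  moreover have bounds: "p ^ k \<le> Q" "a < p ^ (2 * k)" if "(k, a) \<in> I" for k a
  proof -
    have "p ^ k \<le> Q" "Q \<le> p ^ (2 * k)"
      using that p unfolding Q_def I_def by (auto intro: power_increasing)
    then show "p ^ k \<le> Q" "a < p ^ (2 * k)"
      using that unfolding I_def by auto
  qed
  ultimately have in_N: "\<phi> ` I \<subseteq> N (p ^ (2 * K) + j)"
    using filtration generator unfolding K_filtration_def \<phi>_def I_def by fastforce
  have degree_\<phi>: "degree (fst (\<phi> (k, a))) = a + p ^ (2 * k)" "fst (\<phi> (k, a)) \<noteq> 0"
    if "(k, a) \<in> I" for k a
  proof -
    have "k \<ge> 1"
      using that \<open>K \<ge> 1\<close> unfolding I_def by auto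
    then have H: "degree (hasse (p ^ k) (Ssum (gfun TYPE('a)) (p ^ k))) = p ^ (2 * k)"
      using degree_hasse_Ssum_gfun[OF char] p_def by blast
    moreover have "hasse (p ^ k) (Ssum (gfun TYPE('a)) (p ^ k)) \<noteq> 0"
      using H p by (metis degree_0 power_not_zero zero_neq_numeral le_zero_eq)
    ultimately show "degree (fst (\<phi> (k, a))) = a + p ^ (2 * k)" "fst (\<phi> (k, a)) \<noteq> 0"
      using \<open>k \<ge> 1\<close> p unfolding \<phi>_def
      by (auto simp: xdact_second_generator degree_mult_eq degree_monom_eq)
  qed
  have distinct: "inj_on ((\<lambda>v. degree (fst v)) \<circ> \<phi>) I"
  proof (rule inj_onI)
    fix x y
    assume xy: "x \<in> I" "y \<in> I" "((\<lambda>v. degree (fst v)) \<circ> \<phi>) x = ((\<lambda>v. degree (fst v)) \<circ> \<phi>) y"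
    obtain k a k' a' where x: "x = (k, a)" and y: "y = (k', a')"
      by fastforce
    have "a + p ^ (2 * k) = a' + p ^ (2 * k')"
      using xy degree_\<phi> unfolding x y by simp
    with add_power_eq_add_powerD[OF p bounds(2) bounds(2)] xy(1,2) show "x = y"
      unfolding x y by auto
  qed
  have "\<not> module.dependent scaleM (\<phi> ` I)"
    using degree_\<phi> inj_on_imageI[OF distinct]
    by (intro independent_if_distinct_degrees) auto
  then have "card (\<phi> ` I) \<le> vector_space.dim scaleM (N (p ^ (2 * K) + j))"
    using card_le_dim_of_finite_span[OF span[folded p_def] in_N] by blast
  moreover have "card (\<phi> ` I) = K * Q"
    using card_image[OF inj_on_imageI2[OF distinct]] unfolding I_def by simp
  ultimately show ?thesis
    unfolding Q_def p_def by simp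
qed

lemma exists_power_count_gt_linear:
  fixes p j :: nat and C :: real
  assumes "p \<ge> 2"
  shows "\<exists>K\<ge>1. C * real (p ^ (2 * K) + j) < real (K * p ^ (2 * K - 1))"
proof (intro exI conjI)
  define K where "K = j + nat \<lceil>2 * \<bar>C\<bar> * real p\<rceil> + 1"
  define Q where "Q = p ^ (2 * K - 1)"
  show "K \<ge> 1"
    unfolding K_def by simp
  have "p ^ (2 * K) = p * Q"
    unfolding Q_def K_def by (simp flip: power_Suc)
  have "j < p ^ j"
    using assms by (simp add: power_gt_expt)
  also have "\<dots> \<le> p ^ (2 * K)"
    using assms unfolding K_def by (intro power_increasing) auto
  finally have "real j \<le> real p * real Q"
    using \<open>p ^ (2 * K) = p * Q\<close> by (simp flip: of_nat_mult)
  have "C * real (p ^ (2 * K) + j) \<le> \<bar>C\<bar> * real (p * Q + j)"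
    unfolding \<open>p ^ (2 * K) = p * Q\<close> by (intro mult_right_mono) auto
  also have "\<dots> \<le> \<bar>C\<bar> * (2 * real p * real Q)"
    using \<open>real j \<le> real p * real Q\<close> by (intro mult_left_mono) (auto simp: mult.commute)
  also have "\<dots> = (2 * \<bar>C\<bar> * real p) * real Q"
    by simp
  also have "\<dots> < real K * real Q"
  proof (rule mult_strict_right_mono)
    show "2 * \<bar>C\<bar> * real p < real K"
      unfolding K_def by linarith
    show "0 < real Q"
      using assms unfolding Q_def by simp
  qed
  finally show "C * real (p ^ (2 * K) + j) < real (K * p ^ (2 * K - 1))"
    unfolding Q_def by simp
qed

theorem mainTheorem1:
  assumes "perfect_char_p TYPE('a::field)"
  shows "\<not> holonomic (gfun TYPE('a))"
proof
  have char: "CHAR('a) \<ge> 2"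
    using assms prime_CHAR_semidom prime_ge_2_nat unfolding perfect_char_p_def by blast
  assume "holonomic (gfun TYPE('a))"
  then obtain N C where filtration: "K_filtration (gfun TYPE('a)) N"
    and bounded: "\<And>i. (\<exists>B. finite B \<and> module.span scaleM B = N i) \<and>
        real (vector_space.dim scaleM (N i)) \<le> C * real i"
    unfolding holonomic_def by blast
  obtain j where "(0, 1) \<in> N j"
    using filtration unfolding K_filtration_def by blast
  obtain K where "K \<ge> 1"
    and too_big: "C * real (CHAR('a) ^ (2 * K) + j) < real (K * CHAR('a) ^ (2 * K - 1))"
    using exists_power_count_gt_linear[OF char] by blast
  obtain B where "finite B" "module.span scaleM B = N (CHAR('a) ^ (2 * K) + j)"
    using bounded by blast
  then have "K * CHAR('a) ^ (2 * K - 1) \<le> vector_space.dim scaleM (N (CHAR('a) ^ (2 * K) + j))"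
    using K_filtration_gfun_dim_ge[OF char filtration \<open>(0, 1) \<in> N j\<close> \<open>K \<ge> 1\<close>] by blast
  then have "real (K * CHAR('a) ^ (2 * K - 1))
      \<le> real (vector_space.dim scaleM (N (CHAR('a) ^ (2 * K) + j)))"
    by (simp only: of_nat_le_iff)
  with bounded[of "CHAR('a) ^ (2 * K) + j"] too_big show False
    by linarith
qed

end
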